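(* Let $p\in k^\times$, $A_p=k\langle x_1,x_2\rangle/(x_2x_1-px_1x_2)$, and $K$ a Hopf algebra with bijective antipode $S$ such that $A_p$ is a right $K$-comodule algebra via $\rho(x_i)=x_1\otimes y_{1i}+x_2\otimes y_{2i}$, with homological codeterminant ${\sf D}$. Then $$S(y_{11})=y_{22}{\sf D}^{-1},\quad S(y_{12})=-p\,y_{12}{\sf D}^{-1},\quad S(y_{21})=-p^{-1}y_{21}{\sf D}^{-1},\quad S(y_{22})=y_{11}{\sf D}^{-1}.$$
   Context: The Ext-algebra of $A_p$ is $E=k\langle x_1^*,x_2^*\rangle/(x_2^*x_1^*+p^{-1}x_1^*x_2^*,(x_1^* )^2,(x_2^* )^2)$, a left $K$-comodule algebra via $\rho^!(x_i^* )=\sum_{s=1}^2y_{is}\otimes x_s^*$. The homological codeterminant is the grouplike ${\sf D}\in K$ with $\rho^!(x_1^*x_2^* )={\sf D}\otimes x_1^*x_2^*$. *)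

theory Defs
  imports Complex_Main
begin

definition k_algebra :: "('k::field \<Rightarrow> 'a::ring_1 \<Rightarrow> 'a) \<Rightarrow> bool" where
  "k_algebra sc \<longleftrightarrow> Vector_Spaces.vector_space sc \<and>
     (\<forall>c x y. sc c (x * y) = sc c x * y \<and> sc c (x * y) = x * sc c y)"

text \<open>Elements of K (x) K (resp. K (x) K (x) K) are represented by finite lists of
  simple tensors; two representatives denote the same tensor iff all products of
  linear functionals agree on them (over a field, linear functionals separate tensors).\<close>
definition teq2 :: "('k::field \<Rightarrow> 'a::ring_1 \<Rightarrow> 'a) \<Rightarrow> ('a \<times> 'a) list \<Rightarrow> ('a \<times> 'a) list \<Rightarrow> bool" where
  "teq2 sc t u \<longleftrightarrow> (\<forall>f g. Vector_Spaces.linear sc (*) f \<longrightarrow> Vector_Spaces.linear sc (*) g \<longrightarrow>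
      (\<Sum>(a,b)\<leftarrow>t. f a * g b) = (\<Sum>(a,b)\<leftarrow>u. f a * g b))"

definition teq3 :: "('k::field \<Rightarrow> 'a::ring_1 \<Rightarrow> 'a) \<Rightarrow> ('a \<times> 'a \<times> 'a) list \<Rightarrow> ('a \<times> 'a \<times> 'a) list \<Rightarrow> bool" where
  "teq3 sc t u \<longleftrightarrow> (\<forall>f g h. Vector_Spaces.linear sc (*) f \<longrightarrow> Vector_Spaces.linear sc (*) g \<longrightarrow>
      Vector_Spaces.linear sc (*) h \<longrightarrow>
      (\<Sum>(a,b,c)\<leftarrow>t. f a * g b * h c) = (\<Sum>(a,b,c)\<leftarrow>u. f a * g b * h c))"

definition hopf_algebra ::
  "('k::field \<Rightarrow> 'a::ring_1 \<Rightarrow> 'a) \<Rightarrow> ('a \<Rightarrow> ('a \<times> 'a) list) \<Rightarrow> ('a \<Rightarrow> 'k) \<Rightarrow> ('a \<Rightarrow> 'a) \<Rightarrow> bool" where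
  "hopf_algebra sc Delta eps S \<longleftrightarrow>
     k_algebra sc \<and>
     \<comment> \<open>Delta is k-linear\<close>
     (\<forall>x y. teq2 sc (Delta (x + y)) (Delta x @ Delta y)) \<and>
     (\<forall>c x. teq2 sc (Delta (sc c x)) (map (\<lambda>(a,b). (sc c a, b)) (Delta x))) \<and>
     \<comment> \<open>Delta is an algebra map\<close>
     (\<forall>x y. teq2 sc (Delta (x * y)) [(a * c, b * d). (a,b) \<leftarrow> Delta x, (c,d) \<leftarrow> Delta y]) \<and>
     teq2 sc (Delta 1) [(1, 1)] \<and>
     \<comment> \<open>coassociativity\<close>
     (\<forall>x. teq3 sc [(a1, a2, b). (a,b) \<leftarrow> Delta x, (a1,a2) \<leftarrow> Delta a]
                  [(a, b1, b2). (a,b) \<leftarrow> Delta x, (b1,b2) \<leftarrow> Delta b]) \<and>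
     \<comment> \<open>counit: a k-linear algebra map satisfying the counit laws\<close>
     Vector_Spaces.linear sc (*) eps \<and>
     (\<forall>x y. eps (x * y) = eps x * eps y) \<and> eps 1 = 1 \<and>
     (\<forall>x. (\<Sum>(a,b)\<leftarrow>Delta x. sc (eps a) b) = x) \<and>
     (\<forall>x. (\<Sum>(a,b)\<leftarrow>Delta x. sc (eps b) a) = x) \<and>
     \<comment> \<open>antipode\<close>
     Vector_Spaces.linear sc sc S \<and>
     (\<forall>x. (\<Sum>(a,b)\<leftarrow>Delta x. S a * b) = sc (eps x) 1) \<and>
     (\<forall>x. (\<Sum>(a,b)\<leftarrow>Delta x. a * S b) = sc (eps x) 1)"

text \<open>An element of (A (x) K) or (K (x) A), where A has PBW basis x1^a x2^b with
  x2 x1 = q x1 x2, is a function F with F a b the K-coefficient of x1^a x2^b.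
  If ext is True, additionally x1^2 = x2^2 = 0 (exponents > 1 vanish).
  Multiplication: (x1^a1 x2^b1 (x) u)(x1^a2 x2^b2 (x) v) = q^(b1 a2) x1^(a1+a2) x2^(b1+b2) (x) uv.\<close>
definition qmul :: "('k::field \<Rightarrow> 'a::ring_1 \<Rightarrow> 'a) \<Rightarrow> 'k \<Rightarrow> bool \<Rightarrow>
    (nat \<Rightarrow> nat \<Rightarrow> 'a) \<Rightarrow> (nat \<Rightarrow> nat \<Rightarrow> 'a) \<Rightarrow> (nat \<Rightarrow> nat \<Rightarrow> 'a)" where
  "qmul sc q ext F G = (\<lambda>a b. if ext \<and> (a > 1 \<or> b > 1) then 0 else
     (\<Sum>a1\<le>a. \<Sum>b1\<le>b. sc (q ^ (b1 * (a - a1))) (F a1 b1 * G (a - a1) (b - b1))))"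

definition lin2 :: "'a::zero \<Rightarrow> 'a \<Rightarrow> (nat \<Rightarrow> nat \<Rightarrow> 'a)" where
  "lin2 u1 u2 = (\<lambda>a b. if (a, b) = (1, 0) then u1 else if (a, b) = (0, 1) then u2 else 0)"

definition rho_gen :: "(nat \<Rightarrow> nat \<Rightarrow> 'a::zero) \<Rightarrow> nat \<Rightarrow> (nat \<Rightarrow> nat \<Rightarrow> 'a)" where
  "rho_gen y i = lin2 (y 1 i) (y 2 i)"

definition rhoE_gen :: "(nat \<Rightarrow> nat \<Rightarrow> 'a::zero) \<Rightarrow> nat \<Rightarrow> (nat \<Rightarrow> nat \<Rightarrow> 'a)" where
  "rhoE_gen y i = lin2 (y i 1) (y i 2)"

text \<open>Comodule axioms on the generators x1, x2 (equivalently x_1^*, x_2^* ):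
  coassociativity gives Delta(y_ij) = sum_s y_is (x) y_sj and the counit axiom gives
  eps(y_ij) = delta_ij.  Since both sides of each comodule axiom are algebra maps,
  checking them on generators suffices.\<close>
definition comod_gens ::
  "('k::field \<Rightarrow> 'a::ring_1 \<Rightarrow> 'a) \<Rightarrow> ('a \<Rightarrow> ('a \<times> 'a) list) \<Rightarrow> ('a \<Rightarrow> 'k) \<Rightarrow> (nat \<Rightarrow> nat \<Rightarrow> 'a) \<Rightarrow> bool" where
  "comod_gens sc Delta eps y \<longleftrightarrow>
     (\<forall>i\<in>{1,2}. \<forall>j\<in>{1,2}. teq2 sc (Delta (y i j)) [(y i 1, y 1 j), (y i 2, y 2 j)] \<and>
                          eps (y i j) = (if i = j then 1 else 0))"

text \<open>A_p = k<x1,x2>/(x2 x1 - p x1 x2) is a right K-comodule algebra via rho: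
  rho extends to an algebra map A_p -> A_p (x) K (i.e. the defining relation is respected
  in A_p (x) K) and the comodule axioms hold.\<close>
definition Ap_right_comodule_algebra ::
  "('k::field \<Rightarrow> 'a::ring_1 \<Rightarrow> 'a) \<Rightarrow> ('a \<Rightarrow> ('a \<times> 'a) list) \<Rightarrow> ('a \<Rightarrow> 'k) \<Rightarrow> 'k \<Rightarrow> (nat \<Rightarrow> nat \<Rightarrow> 'a) \<Rightarrow> bool" where
  "Ap_right_comodule_algebra sc Delta eps p y \<longleftrightarrow>
     qmul sc p False (rho_gen y 2) (rho_gen y 1)
       = (\<lambda>a b. sc p (qmul sc p False (rho_gen y 1) (rho_gen y 2) a b)) \<and>
     comod_gens sc Delta eps y"

text \<open>E = k<x1^*,x2^*>/(x2^* x1^* + p^-1 x1^* x2^*, (x1^* )^2, (x2^* )^2) is a left K-comodule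
  algebra via rho^! (the relations (x_i^* )^2 = 0 are built into the model with ext = True).\<close>
definition E_left_comodule_algebra ::
  "('k::field \<Rightarrow> 'a::ring_1 \<Rightarrow> 'a) \<Rightarrow> ('a \<Rightarrow> ('a \<times> 'a) list) \<Rightarrow> ('a \<Rightarrow> 'k) \<Rightarrow> 'k \<Rightarrow> (nat \<Rightarrow> nat \<Rightarrow> 'a) \<Rightarrow> bool" where
  "E_left_comodule_algebra sc Delta eps p y \<longleftrightarrow>
     (let q = - inverse p in
       qmul sc q True (rhoE_gen y 1) (rhoE_gen y 1) = (\<lambda>a b. 0) \<and>
       qmul sc q True (rhoE_gen y 2) (rhoE_gen y 2) = (\<lambda>a b. 0) \<and>
       (\<lambda>a b. qmul sc q True (rhoE_gen y 2) (rhoE_gen y 1) a b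
              + sc (inverse p) (qmul sc q True (rhoE_gen y 1) (rhoE_gen y 2) a b)) = (\<lambda>a b. 0)) \<and>
     comod_gens sc Delta eps y"

text \<open>Homological codeterminant: rho^!(x1^* x2^* ) = rho^!(x1^* ) rho^!(x2^* ) = D (x) x1^* x2^*,
  i.e. D is the coefficient of x1^* x2^* in that product.\<close>
definition hom_codet :: "('k::field \<Rightarrow> 'a::ring_1 \<Rightarrow> 'a) \<Rightarrow> 'k \<Rightarrow> (nat \<Rightarrow> nat \<Rightarrow> 'a) \<Rightarrow> 'a" where
  "hom_codet sc p y = qmul sc (- inverse p) True (rhoE_gen y 1) (rhoE_gen y 2) 1 1"

end

theory Submission
  imports Defs
begin

text \<open>The relations of the Koszul dual E say precisely that the homological codeterminant
  D = y11 y22 - p^(-1) y12 y21 is grouplike, so the antipode axiom gives S D D = D S D = 1.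
  Applied to the comatrix y, the antipode axiom also says that S(y) is a left inverse of y,
  and the same relations provide a quantum adjugate of y with respect to D; comparing the two
  yields S(y_ij) D.\<close>

definition k_bilinear ::
  "('k::field \<Rightarrow> 'a::ab_group_add \<Rightarrow> 'a) \<Rightarrow> ('k \<Rightarrow> 'v::ab_group_add \<Rightarrow> 'v) \<Rightarrow> ('a \<Rightarrow> 'a \<Rightarrow> 'v) \<Rightarrow> bool"
  where "k_bilinear s1 s2 B \<longleftrightarrow>
    (\<forall>x. Vector_Spaces.linear s1 s2 (B x)) \<and> (\<forall>z. Vector_Spaces.linear s1 s2 (\<lambda>x. B x z))"

lemma k_bilinear_iff:
  "k_bilinear s1 s2 B \<longleftrightarrow> Vector_Spaces.vector_space s1 \<and> Vector_Spaces.vector_space s2 \<and>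
    (\<forall>x y z. B (x + y) z = B x z + B y z) \<and> (\<forall>x y z. B z (x + y) = B z x + B z y) \<and>
    (\<forall>c x z. B (s1 c x) z = s2 c (B x z)) \<and> (\<forall>c x z. B z (s1 c x) = s2 c (B z x))"
  unfolding k_bilinear_def Vector_Spaces.linear_iff by blast

lemma k_bilinear_sum_expand:
  assumes "k_bilinear s1 s2 B"
  shows "B (\<Sum>e\<in>E. s1 (r e) e) (\<Sum>e'\<in>E'. s1 (r' e') e') = (\<Sum>e\<in>E. \<Sum>e'\<in>E'. s2 (r e * r' e') (B e e'))"
proof -
  have left: "module_hom s1 s2 (\<lambda>x. B x z)" and right: "module_hom s1 s2 (B x)" for x z
    using assms unfolding k_bilinear_def linear_iff_module_hom by blast+
  interpret W: vector_space s2
    using assms unfolding k_bilinear_iff by blast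
  have sum_left: "B (\<Sum>e\<in>E. s1 (r e) e) w = (\<Sum>e\<in>E. s2 (r e) (B e w))" for w
    by (simp add: module_hom.sum[OF left] module_hom.scale[OF left])
  have sum_right: "B e (\<Sum>e'\<in>E'. s1 (r' e') e') = (\<Sum>e'\<in>E'. s2 (r' e') (B e e'))" for e
    by (simp add: module_hom.sum[OF right] module_hom.scale[OF right])
  show ?thesis
    unfolding sum_left unfolding sum_right W.scale_sum_right W.scale_scale ..
qed

lemma finite_dual_coordinates:
  fixes s :: "'k::field \<Rightarrow> 'a::ab_group_add \<Rightarrow> 'a"
  assumes vs: "Vector_Spaces.vector_space s" and "finite F"
  obtains E g where "finite E" "\<And>e. Vector_Spaces.linear s (*) (g e)"
    "\<And>x. x \<in> F \<Longrightarrow> x = (\<Sum>e\<in>E. s (g e x) e)"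
proof -
  interpret V: vector_space s by (rule vs)
  interpret VP: vector_space_pair s "(*) :: 'k \<Rightarrow> 'k \<Rightarrow> 'k"
    by unfold_locales (simp_all add: algebra_simps)
  obtain E where E: "E \<subseteq> F" "V.independent E" "F \<subseteq> V.span E"
    by (rule V.basis_exists[of F]) auto
  have "finite E" using E(1) \<open>finite F\<close> finite_subset by blast
  have "\<forall>e. \<exists>h. Vector_Spaces.linear s (*) h \<and> (\<forall>x\<in>E. h x = (if x = e then 1 else 0))"
    using VP.linear_independent_extend[OF E(2)] by (rule allI)
  then obtain g where g: "\<And>e. Vector_Spaces.linear s (*) (g e)"
    "\<And>e x. x \<in> E \<Longrightarrow> g e x = (if x = e then 1 else 0)"
    by metis
  have "x = (\<Sum>e\<in>E. s (g e x) e)" if "x \<in> V.span E" for x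
    using that
  proof (induction rule: V.span_induct_alt)
    case base
    have "g e 0 = 0" for e
      using g(1)[of e] by (simp add: linear_iff_module_hom module_hom.zero)
    then show ?case by simp
  next
    case (step c x z)
    have "g e (s c x + z) = c * g e x + g e z" for e
      using g(1)[of e] by (simp add: linear_iff_module_hom module_hom.add module_hom.scale)
    then have "(\<Sum>e\<in>E. s (g e (s c x + z)) e) = (\<Sum>e\<in>E. s (c * g e x) e) + (\<Sum>e\<in>E. s (g e z) e)"
      by (simp add: V.scale_left_distrib sum.distrib)
    also have "(\<Sum>e\<in>E. s (c * g e x) e) = (\<Sum>e\<in>E. if e = x then s c e else 0)"
      using step.hyps by (intro sum.cong) (auto simp: g(2))
    also have "\<dots> = s c x" using step.hyps \<open>finite E\<close> by simp
    finally show ?case using step.IH by simp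
  qed
  with E(3) \<open>finite E\<close> g(1) show ?thesis using that by blast
qed

text \<open>Since linear functionals separate finite-dimensional tensors, every bilinear map
  factors through the relation teq2.\<close>
lemma teq2_sum_bilinear:
  fixes s :: "'k::field \<Rightarrow> 'a::ring_1 \<Rightarrow> 'a" and s2 :: "'k \<Rightarrow> 'v::ab_group_add \<Rightarrow> 'v"
  assumes B: "k_bilinear s s2 B" and "teq2 s t u"
  shows "(\<Sum>(a, b)\<leftarrow>t. B a b) = (\<Sum>(a, b)\<leftarrow>u. B a b)"
proof -
  interpret W: vector_space s2
    using B unfolding k_bilinear_iff by blast
  have vs: "Vector_Spaces.vector_space s"
    using B unfolding k_bilinear_iff by blast
  obtain E g where E: "finite E" and g: "\<And>e. Vector_Spaces.linear s (*) (g e)"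
    and rep: "\<And>x. x \<in> fst ` set (t @ u) \<union> snd ` set (t @ u) \<Longrightarrow> x = (\<Sum>e\<in>E. s (g e x) e)"
    by (rule finite_dual_coordinates[OF vs, of "fst ` set (t @ u) \<union> snd ` set (t @ u)"]) auto
  have expand: "(\<Sum>(a, b)\<leftarrow>l. B a b) = (\<Sum>e\<in>E. \<Sum>e'\<in>E. s2 (\<Sum>(a, b)\<leftarrow>l. g e a * g e' b) (B e e'))"
    if "set l \<subseteq> set (t @ u)" for l
  proof -
    have "(\<Sum>(a, b)\<leftarrow>l. B a b) = (\<Sum>(a, b)\<leftarrow>l. \<Sum>e\<in>E. \<Sum>e'\<in>E. s2 (g e a * g e' b) (B e e'))"
    proof (intro arg_cong[where f=sum_list] map_cong refl, clarify)
      fix a b assume "(a, b) \<in> set l"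
      then have "B a b = B (\<Sum>e\<in>E. s (g e a) e) (\<Sum>e'\<in>E. s (g e' b) e')"
        using that rep[of a] rep[of b] by force
      then show "B a b = (\<Sum>e\<in>E. \<Sum>e'\<in>E. s2 (g e a * g e' b) (B e e'))"
        using k_bilinear_sum_expand[OF B] by simp
    qed
    also have "\<dots> = (\<Sum>e\<in>E. \<Sum>e'\<in>E. s2 (\<Sum>(a, b)\<leftarrow>l. g e a * g e' b) (B e e'))"
      by (induction l) (auto simp: sum.distrib W.scale_left_distrib)
    finally show ?thesis .
  qed
  have "(\<Sum>(a, b)\<leftarrow>t. g e a * g e' b) = (\<Sum>(a, b)\<leftarrow>u. g e a * g e' b)" for e e'
    using \<open>teq2 s t u\<close> g unfolding teq2_def by blast
  then show ?thesis using expand[of t] expand[of u] by simp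
qed

lemma k_algebra_vector_space: "k_algebra sc \<Longrightarrow> Vector_Spaces.vector_space sc"
  unfolding k_algebra_def by blast

lemma k_algebra_scale_mult_left: "k_algebra sc \<Longrightarrow> sc c x * z = sc c (x * z)"
  unfolding k_algebra_def by metis

lemma k_algebra_scale_mult_right: "k_algebra sc \<Longrightarrow> x * sc c z = sc c (x * z)"
  unfolding k_algebra_def by metis

lemma k_bilinear_add:
  assumes "k_bilinear s1 s2 B" "k_bilinear s1 s2 B'"
  shows "k_bilinear s1 s2 (\<lambda>a b. B a b + B' a b)"
proof -
  interpret W: vector_space s2
    using assms(1) unfolding k_bilinear_iff by blast
  show ?thesis
    using assms unfolding k_bilinear_iff by (simp add: W.scale_right_distrib algebra_simps)
qed

lemma k_bilinear_mult_right:
  assumes "k_algebra sc" "k_bilinear sc s2 B"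
  shows "k_bilinear sc s2 (\<lambda>a b. B (a * c) (b * d))"
  using assms unfolding k_bilinear_iff
  by (simp add: distrib_right k_algebra_scale_mult_left)

lemma k_bilinear_mult_left:
  assumes "k_algebra sc" "k_bilinear sc s2 B"
  shows "k_bilinear sc s2 (\<lambda>c d. B (a * c) (b * d))"
  using assms unfolding k_bilinear_iff
  by (simp add: distrib_left k_algebra_scale_mult_right)

lemma (in vector_space) scale_sum_list: "scale c (\<Sum>x\<leftarrow>L. f x) = (\<Sum>x\<leftarrow>L. scale c (f x))"
  by (induction L) (simp_all add: scale_right_distrib)

lemma sum_list_pair_products:
  "(\<Sum>(a, b)\<leftarrow>[(a * c, b * d). (a, b) \<leftarrow> L, (c, d) \<leftarrow> M]. B a b) =
    (\<Sum>(a, b)\<leftarrow>L. \<Sum>(c, d)\<leftarrow>M. B (a * c) (b * d))"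
  by (induction L) (simp_all add: split_def o_def)

definition sweedler :: "('a \<Rightarrow> ('a \<times> 'a) list) \<Rightarrow> ('a \<Rightarrow> 'a \<Rightarrow> 'v::comm_monoid_add) \<Rightarrow> 'a \<Rightarrow> 'v"
  where "sweedler Delta B x = (\<Sum>(a, b)\<leftarrow>Delta x. B a b)"

context
  fixes sc :: "'k::field \<Rightarrow> 'a::ring_1 \<Rightarrow> 'a" and Delta eps S
  assumes hopf: "hopf_algebra sc Delta eps S"
begin

lemma hopf_k_algebra: "k_algebra sc"
  using hopf unfolding hopf_algebra_def by blast

interpretation V: vector_space sc
  using k_algebra_vector_space[OF hopf_k_algebra] .

lemma sweedler_teq2:
  "teq2 sc (Delta x) t \<Longrightarrow> k_bilinear sc sc B \<Longrightarrow> sweedler Delta B x = (\<Sum>(a, b)\<leftarrow>t. B a b)"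
  unfolding sweedler_def by (rule teq2_sum_bilinear)

lemma sweedler_add:
  assumes "k_bilinear sc sc B"
  shows "sweedler Delta B (x + z) = sweedler Delta B x + sweedler Delta B z"
proof -
  have "teq2 sc (Delta (x + z)) (Delta x @ Delta z)"
    using hopf unfolding hopf_algebra_def by blast
  then show ?thesis
    using assms by (simp add: sweedler_teq2) (simp add: sweedler_def)
qed

lemma sweedler_scale:
  assumes B: "k_bilinear sc sc B"
  shows "sweedler Delta B (sc c x) = sc c (sweedler Delta B x)"
proof -
  have "teq2 sc (Delta (sc c x)) (map (\<lambda>(a, b). (sc c a, b)) (Delta x))"
    using hopf unfolding hopf_algebra_def by blast
  then have "sweedler Delta B (sc c x) = (\<Sum>(a, b)\<leftarrow>Delta x. sc c (B a b))"
    using B unfolding k_bilinear_iff by (simp add: sweedler_teq2[OF _ B] o_def split_def)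
  also have "\<dots> = sc c (sweedler Delta B x)"
    unfolding sweedler_def V.scale_sum_list by (simp add: split_def)
  finally show ?thesis .
qed

lemma sweedler_mult:
  assumes B: "k_bilinear sc sc B"
  shows "sweedler Delta B (x * z) = sweedler Delta (\<lambda>a b. sweedler Delta (\<lambda>c d. B (a * c) (b * d)) z) x"
proof -
  have "teq2 sc (Delta (x * z)) [(a * c, b * d). (a, b) \<leftarrow> Delta x, (c, d) \<leftarrow> Delta z]"
    using hopf unfolding hopf_algebra_def by blast
  then show ?thesis
    using B by (simp add: sweedler_teq2) (simp add: sum_list_pair_products sweedler_def)
qed

lemma sweedler_comatrix:
  assumes "comod_gens sc Delta eps y" "i \<in> {1, 2}" "j \<in> {1, 2}" "k_bilinear sc sc B"
  shows "sweedler Delta B (y i j) = B (y i 1) (y 1 j) + B (y i 2) (y 2 j)"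
proof -
  have "teq2 sc (Delta (y i j)) [(y i 1, y 1 j), (y i 2, y 2 j)]"
    using assms(1-3) unfolding comod_gens_def by blast
  then show ?thesis
    using assms(4) by (simp add: sweedler_teq2)
qed

lemma sweedler_comatrix_mult:
  assumes y: "comod_gens sc Delta eps y" and B: "k_bilinear sc sc B"
    and "i \<in> {1, 2}" "j \<in> {1, 2}" "k \<in> {1, 2}" "l \<in> {1, 2}"
  shows "sweedler Delta B (y i j * y k l) =
     B (y i 1 * y k 1) (y 1 j * y 1 l) + B (y i 1 * y k 2) (y 1 j * y 2 l) +
     B (y i 2 * y k 1) (y 2 j * y 1 l) + B (y i 2 * y k 2) (y 2 j * y 2 l)"
proof -
  note bilinear = k_bilinear_mult_left[OF hopf_k_algebra B] k_bilinear_mult_right[OF hopf_k_algebra B]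
  have "sweedler Delta B (y i j * y k l) =
      sweedler Delta (\<lambda>a b. B (a * y k 1) (b * y 1 l) + B (a * y k 2) (b * y 2 l)) (y i j)"
    using assms by (simp add: sweedler_mult[OF B] sweedler_comatrix bilinear)
  also have "\<dots> = B (y i 1 * y k 1) (y 1 j * y 1 l) + B (y i 1 * y k 2) (y 1 j * y 2 l) +
     B (y i 2 * y k 1) (y 2 j * y 1 l) + B (y i 2 * y k 2) (y 2 j * y 2 l)"
    using assms by (simp add: sweedler_comatrix k_bilinear_add bilinear add.assoc)
  finally show ?thesis .
qed

text \<open>The relations of the Koszul dual are exactly what makes the cross terms of the
  coproduct of the quantum determinant cancel.\<close>
lemma sweedler_quantum_codet:
  assumes y: "comod_gens sc Delta eps y" and B: "k_bilinear sc sc B"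
    and E1: "y 1 1 * y 1 2 + sc q (y 1 2 * y 1 1) = 0"
    and E2: "y 2 1 * y 2 2 + sc q (y 2 2 * y 2 1) = 0"
    and E3: "y 2 1 * y 1 2 + sc q (y 2 2 * y 1 1) = sc q D"
    and D: "D = y 1 1 * y 2 2 + sc q (y 1 2 * y 2 1)"
  shows "sweedler Delta B D = B D D"
proof -
  have B_add: "B x (z + w) = B x z + B x w" and B_scale: "B x (sc c z) = sc c (B x z)"
    and B_zero: "B x 0 = 0" for x z w c
    using B unfolding k_bilinear_iff by (simp_all, metis add_cancel_left_left)
  have "sweedler Delta B D = sweedler Delta B (y 1 1 * y 2 2) + sc q (sweedler Delta B (y 1 2 * y 2 1))"
    unfolding D by (simp add: sweedler_add[OF B] sweedler_scale[OF B])
  also have "\<dots> = B (y 1 1 * y 2 1) (y 1 1 * y 1 2 + sc q (y 1 2 * y 1 1))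
      + B (y 1 1 * y 2 2) (y 1 1 * y 2 2 + sc q (y 1 2 * y 2 1))
      + B (y 1 2 * y 2 1) (y 2 1 * y 1 2 + sc q (y 2 2 * y 1 1))
      + B (y 1 2 * y 2 2) (y 2 1 * y 2 2 + sc q (y 2 2 * y 2 1))"
    by (simp add: sweedler_comatrix_mult[OF y B] B_add B_scale V.scale_right_distrib algebra_simps)
  also have "\<dots> = B (y 1 1 * y 2 2) D + sc q (B (y 1 2 * y 2 1) D)"
    unfolding E1 E2 E3 B_zero B_scale by (simp add: D)
  also have "\<dots> = B D D"
    using B unfolding D k_bilinear_iff by (simp add: V.scale_right_distrib add_ac)
  finally show ?thesis .
qed

lemma counit_quantum_codet:
  assumes "comod_gens sc Delta eps y"
  shows "eps (y 1 1 * y 2 2 + sc q (y 1 2 * y 2 1)) = 1"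
proof -
  have "module_hom sc (*) eps" "\<forall>x z. eps (x * z) = eps x * eps z"
    using hopf unfolding hopf_algebra_def linear_iff_module_hom by blast+
  then show ?thesis
    using assms unfolding comod_gens_def by (simp add: module_hom.add module_hom.scale)
qed

lemma k_bilinear_antipode_left: "k_bilinear sc sc (\<lambda>a b. S a * b)"
  and k_bilinear_antipode_right: "k_bilinear sc sc (\<lambda>a b. a * S b)"
proof -
  have "module_hom sc sc S"
    using hopf unfolding hopf_algebra_def linear_iff_module_hom by blast
  then show "k_bilinear sc sc (\<lambda>a b. S a * b)" "k_bilinear sc sc (\<lambda>a b. a * S b)"
    unfolding k_bilinear_iff
    by (simp_all add: V.vector_space_axioms module_hom.add module_hom.scale distrib_left distrib_right
        k_algebra_scale_mult_left[OF hopf_k_algebra] k_algebra_scale_mult_right[OF hopf_k_algebra])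
qed

lemma antipode_sweedler_left: "sweedler Delta (\<lambda>a b. S a * b) x = sc (eps x) 1"
  and antipode_sweedler_right: "sweedler Delta (\<lambda>a b. a * S b) x = sc (eps x) 1"
  using hopf unfolding hopf_algebra_def sweedler_def by blast+

lemma antipode_grouplike_inverse:
  assumes "\<And>B. k_bilinear sc sc B \<Longrightarrow> sweedler Delta B g = B g g" and "eps g = 1"
  shows "S g * g = 1" "g * S g = 1"
  using antipode_sweedler_left[of g] antipode_sweedler_right[of g]
    assms(1)[OF k_bilinear_antipode_left] assms(1)[OF k_bilinear_antipode_right] assms(2)
  by simp_all

lemma antipode_comatrix:
  assumes "comod_gens sc Delta eps y" "i \<in> {1, 2}" "j \<in> {1, 2}"
  shows "S (y i 1) * y 1 j + S (y i 2) * y 2 j = (if i = j then 1 else 0)"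
  using antipode_sweedler_left[of "y i j"] assms
  by (simp add: sweedler_comatrix k_bilinear_antipode_left) (auto simp: comod_gens_def)

end

lemma hom_codet_eq:
  assumes "Vector_Spaces.vector_space sc"
  shows "hom_codet sc p y = y 1 1 * y 2 2 + sc (- inverse p) (y 1 2 * y 2 1)"
proof -
  interpret V: vector_space sc by fact
  have "{..1::nat} = {0, 1}" by auto
  then show ?thesis
    unfolding hom_codet_def qmul_def rhoE_gen_def lin2_def by simp
qed

lemma E_left_comodule_algebra_relations:
  assumes "E_left_comodule_algebra sc Delta eps p y" and "Vector_Spaces.vector_space sc"
  defines "q \<equiv> - inverse p"
  shows "y 1 1 * y 1 2 + sc q (y 1 2 * y 1 1) = 0"
    and "y 2 1 * y 2 2 + sc q (y 2 2 * y 2 1) = 0"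
    and "y 2 1 * y 1 2 + sc q (y 2 2 * y 1 1) = sc q (hom_codet sc p y)"
proof -
  interpret V: vector_space sc by fact
  have "{..1::nat} = {0, 1}" by auto
  note expand = qmul_def rhoE_gen_def lin2_def this
  have rel: "qmul sc q True (rhoE_gen y 1) (rhoE_gen y 1) = (\<lambda>a b. 0)"
    "qmul sc q True (rhoE_gen y 2) (rhoE_gen y 2) = (\<lambda>a b. 0)"
    "(\<lambda>a b. qmul sc q True (rhoE_gen y 2) (rhoE_gen y 1) a b
        + sc (inverse p) (qmul sc q True (rhoE_gen y 1) (rhoE_gen y 2) a b)) = (\<lambda>a b. 0)"
    using assms(1) unfolding E_left_comodule_algebra_def Let_def q_def by simp_all
  show "y 1 1 * y 1 2 + sc q (y 1 2 * y 1 1) = 0"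
    using fun_cong[OF fun_cong[OF rel(1)], of 1 1] unfolding expand by (simp add: add.commute)
  show "y 2 1 * y 2 2 + sc q (y 2 2 * y 2 1) = 0"
    using fun_cong[OF fun_cong[OF rel(2)], of 1 1] unfolding expand by (simp add: add.commute)
  have "y 2 1 * y 1 2 + sc q (y 2 2 * y 1 1) + sc (inverse p) (hom_codet sc p y) = 0"
    using fun_cong[OF fun_cong[OF rel(3)], of 1 1]
    unfolding hom_codet_eq[OF assms(2)] q_def expand by (simp add: add.commute)
  then show "y 2 1 * y 1 2 + sc q (y 2 2 * y 1 1) = sc q (hom_codet sc p y)"
    unfolding q_def by (simp add: add_eq_0_iff2)
qed

lemma row_mult_quantum_codet:
  fixes sc :: "'k::field \<Rightarrow> 'a::ring_1 \<Rightarrow> 'a"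
  assumes ka: "k_algebra sc" and pq: "p * q = -1"
    and E1: "a * b + sc q (b * a) = 0" and E2: "c * d + sc q (d * c) = 0"
    and E3: "c * b + sc q (d * a) = sc q D" and D: "D = a * d + sc q (b * c)"
    and u: "s * a + t * c = u" and v: "s * b + t * d = v"
  shows "s * D = u * d + v * sc q c" and "t * D = v * a - sc p (u * b)"
proof -
  interpret V: vector_space sc
    using k_algebra_vector_space[OF ka] .
  note scale_mult = k_algebra_scale_mult_left[OF ka] k_algebra_scale_mult_right[OF ka]
  have pq_scale: "sc p (sc q x) = - x" for x
    using pq by simp
  have "s * D = (s * a + t * c) * d + (s * b + t * d) * sc q c - t * (c * d + sc q (d * c))"
    unfolding D by (simp add: algebra_simps scale_mult V.scale_right_distrib)
  then show "s * D = u * d + v * sc q c"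
    unfolding u v E2 by simp
  have "(s * b + t * d) * a - sc p ((s * a + t * c) * b)
      = - s * sc p (a * b + sc q (b * a)) - t * sc p (c * b + sc q (d * a))"
    by (simp add: algebra_simps scale_mult V.scale_right_distrib pq)
  then show "t * D = v * a - sc p (u * b)"
    unfolding u v E1 E3 pq_scale by simp
qed

theorem lemma5p2:
  fixes sc :: "'k::field \<Rightarrow> 'a::ring_1 \<Rightarrow> 'a"
    and Delta :: "'a \<Rightarrow> ('a \<times> 'a) list" and eps :: "'a \<Rightarrow> 'k" and S :: "'a \<Rightarrow> 'a"
    and p :: 'k and y :: "nat \<Rightarrow> nat \<Rightarrow> 'a"
  assumes "p \<noteq> 0"
    and "hopf_algebra sc Delta eps S"
    and "bij S"
    and "Ap_right_comodule_algebra sc Delta eps p y"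
    and "E_left_comodule_algebra sc Delta eps p y"
  shows "\<exists>Dinv. hom_codet sc p y * Dinv = 1 \<and> Dinv * hom_codet sc p y = 1 \<and>
           S (y 1 1) = y 2 2 * Dinv \<and>
           S (y 1 2) = - sc p (y 1 2 * Dinv) \<and>
           S (y 2 1) = - sc (inverse p) (y 2 1 * Dinv) \<and>
           S (y 2 2) = y 1 1 * Dinv"
proof -
  note hopf = assms(2)
  have ka: "k_algebra sc"
    using hopf_k_algebra[OF hopf] .
  interpret V: vector_space sc
    using k_algebra_vector_space[OF ka] .
  have y: "comod_gens sc Delta eps y"
    using assms(5) unfolding E_left_comodule_algebra_def by simp
  define q where "q = - inverse p"
  define D where "D = hom_codet sc p y"
  have pq: "p * q = -1"
    unfolding q_def using assms(1) by simp
  have D_eq: "D = y 1 1 * y 2 2 + sc q (y 1 2 * y 2 1)"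
    unfolding D_def q_def by (rule hom_codet_eq[OF V.vector_space_axioms])
  note E = E_left_comodule_algebra_relations[OF assms(5) V.vector_space_axioms, folded q_def D_def]
  have D_inv: "S D * D = 1" "D * S D = 1"
    using antipode_grouplike_inverse[OF hopf sweedler_quantum_codet[OF hopf y _ E D_eq]]
      counit_quantum_codet[OF hopf y, of q, folded D_eq] by simp_all
  have S_via_D: "S x = r * S D" if "S x * D = r" for x r
    using that D_inv(2) by (metis mult.assoc mult_1_right)
  note row1 = row_mult_quantum_codet[OF ka pq E D_eq
      antipode_comatrix[OF hopf y, of 1 1] antipode_comatrix[OF hopf y, of 1 2]]
  note row2 = row_mult_quantum_codet[OF ka pq E D_eq
      antipode_comatrix[OF hopf y, of 2 1] antipode_comatrix[OF hopf y, of 2 2]]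
  show ?thesis
    using D_inv S_via_D[OF row1(1)] S_via_D[OF row1(2)] S_via_D[OF row2(1)] S_via_D[OF row2(2)]
    unfolding D_def[symmetric] q_def
    by (intro exI[of _ "S D"]) (simp add: k_algebra_scale_mult_left[OF ka] V.scale_minus_left)
qed

end
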